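(* Let $\alpha,\beta>0$, $X\sim\mathsf{Beta}(\alpha,\beta)$ and $\mu_d=\mathbf{E}[(X-\mathbf{E}[X])^d]$ for integers $d\ge 0$ (so $\mu_0=1$, $\mu_1=0$). Then for every integer $d\ge 2$, $$\mu_d=\frac{(d-1)(\beta-\alpha)}{(\alpha+\beta)(\alpha+\beta+d-1)}\,\mu_{d-1}+\frac{(d-1)\alpha\beta}{(\alpha+\beta)^2(\alpha+\beta+d-1)}\,\mu_{d-2}.$$
   Context: $\mathsf{Beta}(\alpha,\beta)$ denotes the distribution on $[0,1]$ with density proportional to $x^{\alpha-1}(1-x)^{\beta-1}$. *)

theory Defs
  imports "HOL-Probability.Probability"
begin

definition beta_density :: "real \<Rightarrow> real \<Rightarrow> real \<Rightarrow> real" where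
  "beta_density a b x =
     (if 0 < x \<and> x < 1 then x powr (a - 1) * (1 - x) powr (b - 1) / Beta a b else 0)"

end

theory Submission
  imports Defs "HOL-Computational_Algebra.Polynomial"
begin

text \<open>The raw moments \<open>m\<^sub>k = E[X\<^sup>k] = B(\<alpha>+k,\<beta>)/B(\<alpha>,\<beta>)\<close> satisfy
  \<open>(\<alpha>+\<beta>+k) m\<^sub>k\<^sub>+\<^sub>1 = (\<alpha>+k) m\<^sub>k\<close>. By linearity this is the Stein identity
  \<open>E[p'(X) X(1-X)] = E[p(X) ((\<alpha>+\<beta>)X - \<alpha>)]\<close> for every polynomial \<open>p\<close>. Taking
  \<open>p = (x - E[X])\<^sup>d\<^sup>-\<^sup>1\<close> and expanding \<open>x(1-x)\<close> around the mean turns the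
  Stein identity into the three-term recurrence for the central moments.\<close>

lemma Beta_real_pos: "a > 0 \<Longrightarrow> b > 0 \<Longrightarrow> Beta a b > (0::real)"
  unfolding Beta_def by simp

lemma beta_density_nonneg: "a > 0 \<Longrightarrow> b > 0 \<Longrightarrow> beta_density a b x \<ge> 0"
  unfolding beta_density_def using Beta_real_pos[of a b] by auto

lemma nn_integral_beta_density_power:
  assumes a: "a > 0" and b: "b > 0"
  shows "(\<integral>\<^sup>+x. ennreal (beta_density a b x * x ^ k) \<partial>lborel) = ennreal (Beta (a + k) b / Beta a b)"
proof -
  define h where "h x = x powr (a + k - 1) * (1 - x) powr (b - 1) / Beta a b" for x
  have "((\<lambda>x. x powr (a + k - 1) * (1 - x) powr (b - 1)) has_integral Beta (a + k) b) {0<..<1}"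
    using has_integral_Beta_real[of "a + k" b] a b by (simp add: has_integral_Icc_iff_Ioo)
  then have h_integral: "(h has_integral Beta (a + k) b / Beta a b) {0<..<1}"
    unfolding h_def by (rule has_integral_divide)
  have "beta_density a b x * x ^ k = h x * indicator {0<..<1} x" for x
  proof (cases "0 < x \<and> x < 1")
    case True
    then have "x powr (a - 1) * x ^ k = x powr (a + k - 1)"
      by (simp add: powr_realpow[symmetric] powr_add[symmetric] algebra_simps)
    with True show ?thesis
      unfolding beta_density_def h_def by (simp add: field_simps)
  qed (auto simp: beta_density_def)
  then have "(\<integral>\<^sup>+x. ennreal (beta_density a b x * x ^ k) \<partial>lborel)
      = (\<integral>\<^sup>+x. ennreal (h x) * indicator {0<..<1} x \<partial>lborel)"
    by (intro nn_integral_cong) (simp add: indicator_def)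
  also have "\<dots> = ennreal (Beta (a + k) b / Beta a b)"
    by (rule nn_integral_has_integral_lebesgue'[OF _ h_integral])
       (use Beta_real_pos[OF a b] in \<open>auto simp: h_def\<close>)
  finally show ?thesis .
qed

lemma has_bochner_integral_beta_density_power:
  assumes a: "a > 0" and b: "b > 0"
  shows "has_bochner_integral lborel (\<lambda>x. beta_density a b x * x ^ k) (Beta (a + k) b / Beta a b)"
proof -
  have nonneg: "0 \<le> beta_density a b x * x ^ k" for x
    using beta_density_nonneg[OF a b, of x] by (cases "0 < x") (auto simp: beta_density_def)
  have "beta_density a b \<in> borel_measurable lborel"
    unfolding beta_density_def by measurable
  then show ?thesis
    using nonneg nn_integral_beta_density_power[OF a b, of k]
      Beta_real_pos[OF a b] Beta_real_pos[of "a + k" b] a b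
    by (intro has_bochner_integral_nn_integral) auto
qed

definition stein_operator :: "real \<Rightarrow> real \<Rightarrow> real poly \<Rightarrow> real poly" where
  "stein_operator a b p = pderiv p * [:0, 1, -1:] - p * [:-a, a + b:]"

lemma stein_operator_add: "stein_operator a b (p + q) = stein_operator a b p + stein_operator a b q"
  unfolding stein_operator_def pderiv_add by algebra

lemma poly_stein_operator_monom:
  "poly (stein_operator a b (monom c i)) x = (a + i) * c * x ^ i - (a + b + i) * c * x ^ Suc i"
  by (cases i) (simp_all add: stein_operator_def pderiv_monom poly_monom algebra_simps)

lemma poly_stein_operator_power:
  assumes "(a + b) * m = a"
  shows "poly (stein_operator a b ([:-m, 1:] ^ Suc n)) x =
    (real n + 1) * (m * (1 - m)) * (x - m) ^ n + (real n + 1) * (1 - 2 * m) * (x - m) ^ Suc n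
      - (a + b + real n + 1) * (x - m) ^ Suc (Suc n)"
proof -
  have "poly (stein_operator a b ([:-m, 1:] ^ Suc n)) x
      = (real n + 1) * (x - m) ^ n * (x - x * x) - (x - m) ^ Suc n * ((a + b) * x - a)"
  proof -
    have "pderiv [:-m, 1:] = 1"
      by (simp add: pderiv_pCons)
    then have "pderiv ([:-m, 1:] ^ Suc n) = smult (real n + 1) ([:-m, 1:] ^ n)"
      by (simp only: pderiv_power_Suc mult_1_right) (simp add: add.commute)
    then show ?thesis
      by (simp add: stein_operator_def poly_power algebra_simps)
  qed
  also have "x - x * x = m * (1 - m) + (1 - 2 * m) * (x - m) - (x - m) * (x - m)"
    by (simp add: algebra_simps)
  also have "(a + b) * x - a = (a + b) * (x - m)"
    using assms by (simp add: algebra_simps)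
  finally show ?thesis by (simp add: algebra_simps)
qed

locale beta_random_variable = prob_space M for M :: "'s measure" +
  fixes X :: "'s \<Rightarrow> real" and a b :: real
  assumes a_pos: "a > 0" and b_pos: "b > 0"
    and distributed_beta: "distributed M lborel X (\<lambda>x. ennreal (beta_density a b x))"
begin

definition moment :: "nat \<Rightarrow> real" where
  "moment k = Beta (a + k) b / Beta a b"

lemma
  shows integrable_power: "integrable M (\<lambda>\<omega>. X \<omega> ^ k)"
    and expectation_power: "expectation (\<lambda>\<omega>. X \<omega> ^ k) = moment k"
  using has_bochner_integral_beta_density_power[OF a_pos b_pos, of k]
    distributed_integrable[OF distributed_beta, of "\<lambda>x. x ^ k"]
    distributed_integral[OF distributed_beta, of "\<lambda>x. x ^ k"]
    beta_density_nonneg[OF a_pos b_pos]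
  by (auto simp: has_bochner_integral_iff moment_def)

lemma moment_0: "moment 0 = 1"
  using Beta_real_pos[OF a_pos b_pos] by (simp add: moment_def)

lemma moment_Suc: "(a + b + k) * moment (Suc k) = (a + k) * moment k"
proof -
  have "(a + k + b) * Beta (a + k + 1) b = (a + k) * Beta (a + k) b"
    by (rule Beta_plus1_left) (use a_pos in \<open>auto elim!: nonpos_Ints_cases\<close>)
  then show ?thesis
    by (simp add: moment_def algebra_simps add_divide_distrib)
qed

lemma expectation_X: "expectation X = a / (a + b)"
  using moment_Suc[of 0] moment_0 expectation_power[of 1] a_pos b_pos
  by (simp add: field_simps)

lemma integrable_poly: "integrable M (\<lambda>\<omega>. poly p (X \<omega>))"
  unfolding poly_altdef by (intro Bochner_Integration.integrable_sum integrable_mult_right integrable_power)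

lemma integrable_central_power: "integrable M (\<lambda>\<omega>. (X \<omega> - c) ^ k)"
  using integrable_poly[of "[:-c, 1:] ^ k"] by (simp add: poly_power)

lemma expectation_stein_operator_monom:
  "expectation (\<lambda>\<omega>. poly (stein_operator a b (monom c i)) (X \<omega>)) = 0"
proof -
  have "expectation (\<lambda>\<omega>. poly (stein_operator a b (monom c i)) (X \<omega>))
      = (a + i) * c * moment i - (a + b + i) * c * moment (Suc i)"
    unfolding poly_stein_operator_monom
    by (simp only: Bochner_Integration.integral_diff integrable_mult_right integrable_power
        integral_mult_right_zero expectation_power)
  also have "\<dots> = c * ((a + i) * moment i - (a + b + i) * moment (Suc i))"
    by (simp add: algebra_simps)
  finally show ?thesis
    using moment_Suc[of i] by simp
qed

lemma expectation_stein_operator: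
  "expectation (\<lambda>\<omega>. poly (stein_operator a b p) (X \<omega>)) = 0"
proof -
  have "expectation (\<lambda>\<omega>. poly (stein_operator a b (\<Sum>i\<in>A. monom (coeff p i) i)) (X \<omega>)) = 0"
    if "finite A" for A
    using that
  proof (induction A rule: finite_induct)
    case (insert i A)
    then show ?case
      using integrable_poly expectation_stein_operator_monom
      by (simp add: stein_operator_add)
  qed (simp add: stein_operator_def)
  from this[of "{..degree p}"] show ?thesis
    by (simp add: poly_as_sum_of_monoms)
qed

lemma central_moment_recurrence:
  defines "m \<equiv> expectation X"
  defines "\<mu> \<equiv> \<lambda>j. expectation (\<lambda>\<omega>. (X \<omega> - m) ^ j)"
  shows "(a + b + real n + 1) * \<mu> (Suc (Suc n))
    = (real n + 1) * (1 - 2 * m) * \<mu> (Suc n) + (real n + 1) * (m * (1 - m)) * \<mu> n"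
proof -
  have mean: "(a + b) * m = a"
    using expectation_X a_pos b_pos unfolding m_def by (simp add: field_simps)
  have "(real n + 1) * (m * (1 - m)) * \<mu> n + (real n + 1) * (1 - 2 * m) * \<mu> (Suc n)
      - (a + b + real n + 1) * \<mu> (Suc (Suc n))
    = expectation (\<lambda>\<omega>. (real n + 1) * (m * (1 - m)) * (X \<omega> - m) ^ n
      + (real n + 1) * (1 - 2 * m) * (X \<omega> - m) ^ Suc n - (a + b + real n + 1) * (X \<omega> - m) ^ Suc (Suc n))"
    unfolding \<mu>_def
    by (simp only: Bochner_Integration.integral_diff Bochner_Integration.integral_add
        Bochner_Integration.integrable_add Bochner_Integration.integrable_diff
        integrable_mult_right integrable_central_power integral_mult_right_zero)
  also have "\<dots> = 0"
    using expectation_stein_operator[of "[:-m, 1:] ^ Suc n"]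
    unfolding poly_stein_operator_power[OF mean] .
  finally show ?thesis by simp
qed

end

theorem theorem3:
  fixes M :: "'s measure" and X :: "'s \<Rightarrow> real" and \<alpha> \<beta> :: real and \<mu> :: "nat \<Rightarrow> real"
  assumes "prob_space M"
    and "\<alpha> > 0" and "\<beta> > 0"
    and "distributed M lborel X (\<lambda>x. ennreal (beta_density \<alpha> \<beta> x))"
    and "\<And>d. \<mu> d = prob_space.expectation M (\<lambda>\<omega>. (X \<omega> - prob_space.expectation M X) ^ d)"
    and "d \<ge> 2"
  shows "\<mu> d = real (d - 1) * (\<beta> - \<alpha>) / ((\<alpha> + \<beta>) * (\<alpha> + \<beta> + real d - 1)) * \<mu> (d - 1)
             + real (d - 1) * \<alpha> * \<beta> / ((\<alpha> + \<beta>)^2 * (\<alpha> + \<beta> + real d - 1)) * \<mu> (d - 2)"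
proof -
  interpret beta_random_variable M X \<alpha> \<beta>
    using assms(1-4) by (simp add: beta_random_variable_def beta_random_variable_axioms_def)
  obtain n where d: "d = Suc (Suc n)"
    using \<open>d \<ge> 2\<close> by (metis add_2_eq_Suc le_Suc_ex)
  have pos: "\<alpha> + \<beta> > 0" "\<alpha> + \<beta> + real d - 1 > 0"
    using \<open>\<alpha> > 0\<close> \<open>\<beta> > 0\<close> \<open>d \<ge> 2\<close> by simp_all
  have "1 - 2 * expectation X = (\<beta> - \<alpha>) / (\<alpha> + \<beta>)"
    "expectation X * (1 - expectation X) = \<alpha> * \<beta> / (\<alpha> + \<beta>)\<^sup>2"
    using pos unfolding expectation_X by (simp_all add: field_simps power2_eq_square)
  with central_moment_recurrence[of n]
  have recurrence: "(\<alpha> + \<beta> + real d - 1) * \<mu> d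
      = real (d - 1) * ((\<beta> - \<alpha>) / (\<alpha> + \<beta>)) * \<mu> (d - 1)
        + real (d - 1) * (\<alpha> * \<beta> / (\<alpha> + \<beta>)\<^sup>2) * \<mu> (d - 2)"
    unfolding assms(5)[symmetric] d by (simp add: add_ac)
  have solve: "w = N * D / (S * T) * u + N * E / (S\<^sup>2 * T) * v"
    if "S \<noteq> 0" "T \<noteq> 0" "T * w = N * (D / S) * u + N * (E / S\<^sup>2) * v" for S T N D E u v w :: real
    using that by (simp add: field_simps)
  show ?thesis
    using solve[OF _ _ recurrence] pos by (simp add: mult.assoc)
qed

end
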